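(* Let $\{x_k\}$ be an infinite sequence generated by Algorithm SInexPD (the Subgradient-InexP method with the dynamic stepsize rule), under the standing assumptions. Then $\inf_{k\ge0}f(x_k)=f^*$, where $f^*=\inf_{x\in C}f(x)$ (possibly $-\infty$).
   Context: Problem: minimize a convex $f:\mathbb{R}^n\to\mathbb{R}$ over a nonempty closed convex $C\subset\mathbb{R}^n$; $f^*:=\inf_{x\in C}f(x)$. For $\epsilon\ge0$, $\partial_\epsilon f(x):=\{s: f(y)\ge f(x)+\langle s,y-x\rangle-\epsilon\ \forall y\}$; $\partial f=\partial_0f$. Relative error tolerance function: any $\varphi_{\gamma,\theta,\lambda}:(\mathbb{R}^n)^3\to[0,\infty)$ with $\varphi_{\gamma,\theta,\lambda}(u,v,w)\le\gamma\|v-u\|^2+\theta\|w-v\|^2+\lambda\|w-u\|^2$; for $u\in C$, $\mathcal{P}_C(\varphi_{\gamma,\theta,\lambda},u,v):=\{w\in C:\langle v-w,z-w\rangle\le\varphi_{\gamma,\theta,\lambda}(u,v,w)\ \forall z\in C\}$. Standing assumptions: nonnegative sequences $\gamma_k\in[0,\bar\gamma)$, $\theta_k\in[0,\bar\theta)$, $\lambda_k\in[0,\bar\lambda)$ with $\bar\gamma\ge0$, $\bar\theta,\bar\lambda\in[0,1/2)$; $\nu:=\frac{1+2\bar\gamma}{1-2\bar\lambda}$; fixed $\mu\ge0$ and $0<\underline\beta\le\bar\beta<\frac{2}{2\mu+\nu}$. Algorithm SInexPD. Step 0: choose $x_0\in C$, $\delta_0>0$, $R>0$; set $k=0$, $\sigma_0=0$,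 $f^{rec}_{-1}=+\infty$, $\ell=0$, $k(0)=0$. Step 1: if $f(x_k)<f^{rec}_{k-1}$ set $f^{rec}_k=f(x_k)$, $x^{rec}_k=x_k$; else $f^{rec}_k=f^{rec}_{k-1}$, $x^{rec}_k=x^{rec}_{k-1}$. Step 2: if $0\in\partial f(x_k)$ stop. Step 3: if $f(x_k)\le f^{rec}_{k(\ell)}-\tfrac12\delta_\ell$, set $k(\ell+1)=k$, $\sigma_k=0$, $\delta_{\ell+1}=\delta_\ell$, $\ell\leftarrow\ell+1$ and go to Step 5. Step 4: if $\sigma_k>R$, set $k(\ell+1)=k$, $\sigma_k=0$, $\delta_{\ell+1}=\tfrac12\delta_\ell$, $x_k=x^{rec}_k$, $\ell\leftarrow\ell+1$. Step 5: set $f^{lev}_k:=f^{rec}_{k(\ell)}-\delta_\ell$; select $\beta_k\in[\underline\beta,\bar\beta]$ and $\epsilon_k$ with $\{\epsilon_k\}$ nonincreasing and $0<\epsilon_k\le\mu\beta_k[f(x_k)-f^{lev}_k]$; choose nonzero $s_k\in\partial_{\epsilon_k}f(x_k)$, set $\tilde t_k:=\beta_k\frac{f(x_k)-f^{lev}_k}{\|s_k\|}$, $t_k:=\tilde t_k/\|s_k\|$, and take any $x_{k+1}\in\mathcal{P}_C(\varphi_{\gamma_k,\theta_k,\lambda_k},x_k,x_k-t_ks_k)$. Step 6: set $\sigma_{k+1}:=\sigma_k+\tilde t_k$, $k\leftarrow k+1$, go to Step 1. *)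

theory Defs
  imports "HOL-Analysis.Analysis"
begin

definition eps_subdiff :: "('a::real_inner \<Rightarrow> real) \<Rightarrow> real \<Rightarrow> 'a \<Rightarrow> 'a set" where
  "eps_subdiff f eps x = {s. \<forall>y. f y \<ge> f x + inner s (y - x) - eps}"

definition rel_err_tol :: "real \<Rightarrow> real \<Rightarrow> real \<Rightarrow> ('a::real_normed_vector \<Rightarrow> 'a \<Rightarrow> 'a \<Rightarrow> real) \<Rightarrow> bool" where
  "rel_err_tol g th la phi \<longleftrightarrow>
     (\<forall>u v w. 0 \<le> phi u v w \<and>
        phi u v w \<le> g * (norm (v - u))^2 + th * (norm (w - v))^2 + la * (norm (w - u))^2)"

definition inexact_proj :: "'a::real_inner set \<Rightarrow> ('a \<Rightarrow> 'a \<Rightarrow> 'a \<Rightarrow> real) \<Rightarrow> 'a \<Rightarrow> 'a \<Rightarrow> 'a set" where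
  "inexact_proj C phi u v = {w \<in> C. \<forall>z\<in>C. inner (v - w) (z - w) \<le> phi u v w}"

end

theory Submission
  imports Defs
begin

text \<open>Suppose some y in C has f y below c = inf f (x k). Since the step size is tied to the
  level f^lev_k, every point of C with value at most f^lev_k - eta gets closer to the
  iterates by an amount proportional to eta times the step (a Fejer estimate).
  If resets (Step 4) stopped, the target gap delta would stay fixed, descents (Step 3)
  would stop too because f is bounded below by c, the iterates would stay in a ball, the
  subgradients would be bounded, and so the steps would be bounded below and their sum
  sigma would exceed R. Hence resets happen infinitely often and delta tends to 0. Then
  the levels eventually lie above f y, the iterates are bounded, and a group of iterations
  ending in a reset has travelled more than R although the Fejer estimate with respect to
  a point at distance O(delta) of the record point bounds this travel by O(delta).\<close>

lemma eps_subdiff_bounded: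
  fixes f :: "'a::euclidean_space \<Rightarrow> real"
  assumes "convex_on UNIV f"
  shows "\<exists>L>0. \<forall>z e s. norm (z - y0) \<le> M \<longrightarrow> e \<le> E \<longrightarrow> s \<in> eps_subdiff f e z \<longrightarrow> norm s \<le> L"
proof -
  have "continuous_on (cball y0 (M + 1)) f"
    using convex_on_continuous[OF open_UNIV assms] continuous_on_subset by blast
  then have "compact (f ` cball y0 (M + 1))" by (intro compact_continuous_image) auto
  then obtain B where B: "B > 0" "\<forall>v\<in>f ` cball y0 (M + 1). norm v \<le> B"
    using compact_imp_bounded bounded_pos by metis
  have f_bound: "\<bar>f z\<bar> \<le> B" if "norm (z - y0) \<le> M + 1" for z
    using B(2) that by (auto simp: dist_norm norm_minus_commute)
  show ?thesis
  proof (intro exI[of _ "2 * B + \<bar>E\<bar> + 1"] conjI allI impI)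
    show "0 < 2 * B + \<bar>E\<bar> + 1" using B by simp
    fix z e s assume z: "norm (z - y0) \<le> M" and e: "e \<le> E" and s: "s \<in> eps_subdiff f e z"
    show "norm s \<le> 2 * B + \<bar>E\<bar> + 1"
    proof (cases "s = 0")
      case True then show ?thesis using B by simp
    next
      case False
      \<comment> \<open>test the subgradient inequality at the unit step in direction s\<close>
      define z' where "z' = z + (1 / norm s) *\<^sub>R s"
      have "norm (z' - y0) \<le> norm (z' - z) + norm (z - y0)"
        using norm_triangle_ineq[of "z' - z" "z - y0"] by simp
      then have z'_near: "norm (z' - y0) \<le> M + 1" using False z by (simp add: z'_def)
      have "f z' \<ge> f z + inner s (z' - z) - e" using s by (auto simp: eps_subdiff_def)
      moreover have "inner s (z' - z) = norm s"
        using False by (simp add: z'_def power2_norm_eq_inner[symmetric] power2_eq_square)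
      ultimately show ?thesis using f_bound[OF z'_near] f_bound[of z] z e by linarith
    qed
  qed
qed

lemma inexact_proj_dist_le:
  fixes u v w y :: "'a::real_inner"
  assumes u: "u \<in> C" and y: "y \<in> C" and w: "w \<in> inexact_proj C phi u v"
    and phi: "rel_err_tol g th la phi" and g: "0 \<le> g" and th: "0 \<le> th" "th < 1/2"
    and la: "0 \<le> la" "la < 1/2"
  shows "(norm (w - y))\<^sup>2 \<le> (norm (v - y))\<^sup>2 + ((1 + 2*g) / (1 - 2*la) - 1) * (norm (v - u))\<^sup>2"
    and "(norm (w - u))\<^sup>2 \<le> (1 + 2*g) / (1 - 2*la) * (norm (v - u))\<^sup>2"
proof -
  define A where "A = (norm (w - u))\<^sup>2"
  define P where "P = (norm (v - w))\<^sup>2"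
  define b where "b = (norm (v - u))\<^sup>2"
  have phi_le: "phi u v w \<le> g * b + th * P + la * A"
    using phi unfolding rel_err_tol_def A_def P_def b_def by (simp add: norm_minus_commute)
  have proj: "\<And>z. z \<in> C \<Longrightarrow> inner (v - w) (z - w) \<le> phi u v w"
    using w by (auto simp: inexact_proj_def)
  have "A = b - P + 2 * inner (v - w) (u - w)"
    unfolding A_def b_def P_def
    by (simp add: power2_norm_eq_inner inner_diff_left inner_diff_right inner_commute algebra_simps)
  then have A_le: "(1 - 2*la) * A \<le> (1 + 2*g) * b - (1 - 2*th) * P"
    using proj[OF u] phi_le by (simp add: algebra_simps)
  have "(norm (w - y))\<^sup>2 = (norm (v - y))\<^sup>2 - P + 2 * inner (v - w) (y - w)"
    unfolding P_def
    by (simp add: power2_norm_eq_inner inner_diff_left inner_diff_right inner_commute algebra_simps)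
  then have wy_le: "(norm (w - y))\<^sup>2 \<le> (norm (v - y))\<^sup>2 - (1 - 2*th) * P + 2*g*b + 2*la*A"
    using proj[OF y] phi_le by (simp add: algebra_simps)
  have pos: "1 - 2*la > 0" using la by simp
  have nonneg: "P \<ge> 0" "b \<ge> 0" by (auto simp: P_def b_def)
  have "A \<le> ((1 + 2*g) * b - (1 - 2*th) * P) / (1 - 2*la)"
    using A_le pos by (simp add: field_simps)
  also have "\<dots> \<le> (1 + 2*g) * b / (1 - 2*la)"
    using pos th nonneg by (intro divide_right_mono) auto
  finally have A_bound: "A \<le> (1 + 2*g) * b / (1 - 2*la)" .
  then show "(norm (w - u))\<^sup>2 \<le> (1 + 2*g) / (1 - 2*la) * (norm (v - u))\<^sup>2"
    unfolding A_def b_def by simp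
  have "2*la*A \<le> 2*la*((1 + 2*g) * b / (1 - 2*la))"
    using A_bound la by (intro mult_left_mono) auto
  moreover have "(1 - 2*th) * P \<ge> 0" using th nonneg by simp
  moreover have "2*g*b + 2*la*((1 + 2*g) * b / (1 - 2*la)) = ((1 + 2*g) / (1 - 2*la) - 1) * b"
    using pos by (simp add: field_simps)
  ultimately show "(norm (w - y))\<^sup>2 \<le> (norm (v - y))\<^sup>2 + ((1 + 2*g) / (1 - 2*la) - 1) * (norm (v - u))\<^sup>2"
    using wy_le unfolding b_def by linarith
qed

lemma inexact_proj_subgradient_step:
  fixes u y s w :: "'a::real_inner"
  assumes u: "u \<in> C" and y: "y \<in> C" and s: "s \<in> eps_subdiff f e u" and t: "0 \<le> t"
    and w: "w \<in> inexact_proj C phi u (u - t *\<^sub>R s)"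
    and phi: "rel_err_tol g th la phi" and g: "0 \<le> g" and th: "0 \<le> th" "th < 1/2"
    and la: "0 \<le> la" "la < 1/2" and nu: "(1 + 2*g) / (1 - 2*la) \<le> nu"
  shows "(norm (w - y))\<^sup>2 \<le> (norm (u - y))\<^sup>2 - 2 * t * (f u - f y - e) + nu * (t * norm s)\<^sup>2"
    and "(norm (w - u))\<^sup>2 \<le> nu * (t * norm s)\<^sup>2"
proof -
  let ?v = "u - t *\<^sub>R s"
  have step_norm: "norm (?v - u) = t * norm s" using t by simp
  have "(norm (?v - y))\<^sup>2 = inner ((u - y) - t *\<^sub>R s) ((u - y) - t *\<^sub>R s)"
    by (simp add: power2_norm_eq_inner algebra_simps)
  also have "\<dots> = inner (u - y) (u - y) - 2 * t * inner s (u - y) + t\<^sup>2 * inner s s"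
    by (simp add: inner_diff_left inner_diff_right inner_commute power2_eq_square algebra_simps)
  finally have v_dist: "(norm (?v - y))\<^sup>2 = (norm (u - y))\<^sup>2 - 2 * t * inner s (u - y) + (t * norm s)\<^sup>2"
    by (simp add: power2_norm_eq_inner power_mult_distrib)
  have "f y \<ge> f u + inner s (y - u) - e" using s by (simp add: eps_subdiff_def)
  then have "f u - f y - e \<le> inner s (u - y)" by (simp add: inner_diff_right)
  then have "t * (f u - f y - e) \<le> t * inner s (u - y)" using t by (rule mult_left_mono)
  moreover have "((1 + 2*g) / (1 - 2*la) - 1) * (t * norm s)\<^sup>2 \<le> (nu - 1) * (t * norm s)\<^sup>2"
    using nu by (intro mult_right_mono) auto
  ultimately show "(norm (w - y))\<^sup>2 \<le> (norm (u - y))\<^sup>2 - 2 * t * (f u - f y - e) + nu * (t * norm s)\<^sup>2"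
    using inexact_proj_dist_le(1)[OF u y w phi g th la] unfolding v_dist step_norm
    by (simp add: algebra_simps)
  have "(1 + 2*g) / (1 - 2*la) * (t * norm s)\<^sup>2 \<le> nu * (t * norm s)\<^sup>2"
    using nu by (intro mult_right_mono) auto
  then show "(norm (w - u))\<^sup>2 \<le> nu * (t * norm s)\<^sup>2"
    using inexact_proj_dist_le(2)[OF u y w phi g th la] unfolding step_norm by linarith
qed

text \<open>The hypotheses of \<open>mainTheorem10\<close> except closedness and nonemptiness of C and the
  stopping test of Step 2, which the argument does not need.\<close>

locale sinexpd =
  fixes f :: "'a::euclidean_space \<Rightarrow> real" and C :: "'a set"
    and x xr xrec s :: "nat \<Rightarrow> 'a"
    and frec flev sig sg beta eps tt gam the lam :: "nat \<Rightarrow> real"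
    and lc lc' kk :: "nat \<Rightarrow> nat" and dl :: "nat \<Rightarrow> real"
    and phi :: "nat \<Rightarrow> 'a \<Rightarrow> 'a \<Rightarrow> 'a \<Rightarrow> real"
    and R gb tb lb mu blo bhi :: real
  assumes f_convex: "convex_on UNIV f" and C_convex: "convex C"
    and gam: "\<And>k. 0 \<le> gam k \<and> gam k < gb" and gb: "0 \<le> gb"
    and the: "\<And>k. 0 \<le> the k \<and> the k < tb" and tb: "0 \<le> tb" "tb < 1/2"
    and lam: "\<And>k. 0 \<le> lam k \<and> lam k < lb" and lb: "0 \<le> lb" "lb < 1/2"
    and mu: "0 \<le> mu"
    and betas: "0 < blo" "blo \<le> bhi" "bhi < 2 / (2 * mu + (1 + 2 * gb) / (1 - 2 * lb))"
    and x0: "x 0 \<in> C" and dl0: "dl 0 > 0" and R: "R > 0"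
    and init: "sig 0 = 0" "lc 0 = 0" "kk 0 = 0"
    and rec0: "frec 0 = f (x 0)" "xrec 0 = x 0"
    and recS: "\<And>k. if f (x (Suc k)) < frec k
                 then frec (Suc k) = f (x (Suc k)) \<and> xrec (Suc k) = x (Suc k)
                 else frec (Suc k) = frec k \<and> xrec (Suc k) = xrec k"
    and step34: "\<And>k.
       if f (x k) \<le> frec (kk (lc k)) - dl (lc k) / 2
       then kk (Suc (lc k)) = k \<and> sg k = 0 \<and> dl (Suc (lc k)) = dl (lc k)
            \<and> lc' k = Suc (lc k) \<and> xr k = x k
       else if sig k > R
       then kk (Suc (lc k)) = k \<and> sg k = 0 \<and> dl (Suc (lc k)) = dl (lc k) / 2
            \<and> lc' k = Suc (lc k) \<and> xr k = xrec k
       else sg k = sig k \<and> lc' k = lc k \<and> xr k = x k"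
    and flev: "\<And>k. flev k = frec (kk (lc' k)) - dl (lc' k)"
    and beta: "\<And>k. blo \<le> beta k \<and> beta k \<le> bhi"
    and eps_noninc: "\<And>k. eps (Suc k) \<le> eps k"
    and eps: "\<And>k. 0 < eps k \<and> eps k \<le> mu * beta k * (f (xr k) - flev k)"
    and s: "\<And>k. s k \<noteq> 0 \<and> s k \<in> eps_subdiff f (eps k) (xr k)"
    and tt: "\<And>k. tt k = beta k * (f (xr k) - flev k) / norm (s k)"
    and phi: "\<And>k. rel_err_tol (gam k) (the k) (lam k) (phi k)"
    and xS: "\<And>k. x (Suc k) \<in> inexact_proj C (phi k) (xr k) (xr k - (tt k / norm (s k)) *\<^sub>R s k)"
    and sigS: "\<And>k. sig (Suc k) = sg k + tt k"
    and lcS: "\<And>k. lc (Suc k) = lc' k"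
begin

text \<open>At the start of iteration k the current group has reference value
  \<open>ref_value k\<close> (the paper's f^rec_{k(l)}) and target gap \<open>delta k\<close> (the paper's delta_l).
  A group ends with a \<open>descent\<close> (Step 3) or a \<open>reset\<close> (Step 4).\<close>

definition ref_value :: "nat \<Rightarrow> real" where
  "ref_value k = frec (kk (lc k))"

definition delta :: "nat \<Rightarrow> real" where
  "delta k = dl (lc k)"

definition descent :: "nat \<Rightarrow> bool" where
  "descent k \<longleftrightarrow> f (x k) \<le> ref_value k - delta k / 2"

definition reset :: "nat \<Rightarrow> bool" where
  "reset k \<longleftrightarrow> \<not> descent k \<and> R < sig k"

definition restart :: "nat \<Rightarrow> bool" where
  "restart k \<longleftrightarrow> descent k \<or> reset k"

definition nu :: real where
  "nu = (1 + 2 * gb) / (1 - 2 * lb)"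

lemma ref_value_Suc: "ref_value (Suc k) = (if restart k then frec k else ref_value k)"
  using step34[of k] lcS[of k]
  by (auto simp: ref_value_def restart_def reset_def descent_def delta_def split: if_splits)

lemma delta_Suc: "delta (Suc k) = (if reset k then delta k / 2 else delta k)"
  using step34[of k] lcS[of k]
  by (auto simp: delta_def reset_def descent_def ref_value_def split: if_splits)

lemma sig_Suc: "sig (Suc k) = (if restart k then 0 else sig k) + tt k"
  using step34[of k] sigS[of k]
  by (auto simp: restart_def reset_def descent_def ref_value_def delta_def split: if_splits)

lemma xr_eq: "xr k = (if reset k then xrec k else x k)"
  using step34[of k] by (auto simp: reset_def descent_def ref_value_def delta_def split: if_splits)

lemma flev_eq: "flev k = ref_value (Suc k) - delta (Suc k)"
  using flev[of k] lcS[of k] by (simp add: ref_value_def delta_def)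

lemma sig_le_R: "\<not> restart k \<Longrightarrow> sig k \<le> R"
  by (auto simp: restart_def reset_def)

lemma frec_attained: "frec k = f (xrec k) \<and> (\<exists>j\<le>k. xrec k = x j)"
proof (induction k)
  case 0 then show ?case using rec0 by auto
next
  case (Suc k) then show ?case using recS[of k] by (auto split: if_splits intro: le_SucI)
qed

lemma frec_Suc_le: "frec (Suc k) \<le> frec k"
  using recS[of k] by (auto split: if_splits)

lemma frec_le: "frec k \<le> f (x k)"
  using recS[of "k - 1"] rec0 by (cases k) (auto split: if_splits)

lemma x_in_C: "x k \<in> C"
  using xS[of "k - 1"] x0 by (cases k) (auto simp: inexact_proj_def)

lemma xrec_in_C: "xrec k \<in> C"
  using frec_attained[of k] x_in_C by auto

lemma xr_in_C: "xr k \<in> C"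
  using xr_eq[of k] x_in_C xrec_in_C by auto

lemma delta_pos: "delta k > 0"
  by (induction k) (use init dl0 in \<open>simp_all add: delta_def delta_Suc[unfolded delta_def]\<close>)

lemma delta_antimono: "k \<le> k' \<Longrightarrow> delta k' \<le> delta k"
  by (rule lift_Suc_antimono_le[of delta]) (use delta_pos in \<open>auto simp: delta_Suc\<close>)

lemma frec_le_ref_value: "frec k \<le> ref_value k"
proof (induction k)
  case 0 then show ?case using init by (simp add: ref_value_def)
next
  case (Suc k) then show ?case using ref_value_Suc[of k] frec_Suc_le[of k] by auto
qed

lemma ref_value_antimono: "k \<le> k' \<Longrightarrow> ref_value k' \<le> ref_value k"
  by (rule lift_Suc_antimono_le[of ref_value]) (use frec_le_ref_value in \<open>auto simp: ref_value_Suc\<close>)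

lemma not_restart_0: "\<not> restart 0"
  using rec0 dl0 init R by (simp add: restart_def reset_def descent_def ref_value_def delta_def)

lemma frec_gt_threshold: "ref_value (Suc k) - delta (Suc k) / 2 < frec k"
proof (induction k)
  case 0 then show ?case
    using not_restart_0 ref_value_Suc[of 0] delta_Suc[of 0] delta_pos[of 0] init
    by (simp add: ref_value_def restart_def)
next
  case (Suc k)
  show ?case
  proof (cases "restart (Suc k)")
    case True then show ?thesis using ref_value_Suc[of "Suc k"] delta_pos[of "Suc (Suc k)"] by simp
  next
    case False
    then have "f (x (Suc k)) > ref_value (Suc k) - delta (Suc k) / 2"
      by (auto simp: restart_def descent_def)
    then show ?thesis using False Suc ref_value_Suc[of "Suc k"] delta_Suc[of "Suc k"] recS[of k]
      by (auto simp: restart_def split: if_splits)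
  qed
qed

lemma group_start:
  assumes "p = 0 \<or> restart p"
  shows "xr p = xrec p \<and> ref_value (Suc p) = frec p \<and> sig (Suc p) = tt p"
proof (cases p)
  case 0 then show ?thesis
    using not_restart_0 xr_eq[of 0] rec0 ref_value_Suc[of 0] sig_Suc[of 0] init
    by (simp add: ref_value_def restart_def)
next
  case (Suc p')
  have "xr p = xrec p"
  proof (cases "reset p")
    case False
    \<comment> \<open>a descent iterate lies below the threshold, hence is a new record\<close>
    then have "f (x p) \<le> ref_value p - delta p / 2"
      using assms Suc by (simp add: restart_def descent_def)
    then have "f (x p) < frec p'" using frec_gt_threshold[of p'] Suc by simp
    then show ?thesis using recS[of p'] Suc xr_eq[of p] False by simp
  qed (simp add: xr_eq)
  then show ?thesis using assms Suc ref_value_Suc[of p] sig_Suc[of p] by auto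
qed

lemma group_stationary:
  assumes "m \<le> n" and "\<And>j. m \<le> j \<Longrightarrow> j < n \<Longrightarrow> \<not> restart j"
  shows "ref_value n = ref_value m \<and> delta n = delta m \<and> sig n = sig m + (\<Sum>j\<in>{m..<n}. tt j)"
  using assms
proof (induction n rule: dec_induct)
  case (step n)
  then show ?case
    using ref_value_Suc[of n] delta_Suc[of n] sig_Suc[of n] by (simp add: restart_def)
qed simp

lemma last_group_start: "\<exists>p\<le>q. (p = 0 \<or> restart p) \<and> (\<forall>j. p < j \<and> j \<le> q \<longrightarrow> \<not> restart j)"
proof (induction q)
  case (Suc q)
  show ?case
  proof (cases "restart (Suc q)")
    case False
    with Suc obtain p where "p \<le> q" "p = 0 \<or> restart p" "\<forall>j. p < j \<and> j \<le> q \<longrightarrow> \<not> restart j"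
      by blast
    with False show ?thesis by (intro exI[of _ p]) (auto simp: le_Suc_eq)
  qed auto
qed simp

lemma level_below_f: "flev k < f (xr k)"
proof (rule ccontr)
  assume "\<not> ?thesis"
  then have "mu * beta k * (f (xr k) - flev k) \<le> 0"
    using mu beta[of k] betas by (intro mult_nonneg_nonpos) auto
  then show False using eps[of k] by simp
qed

lemma norm_s_pos: "norm (s k) > 0"
  using s[of k] by simp

lemma tt_pos: "tt k > 0"
  using tt[of k] level_below_f[of k] norm_s_pos[of k] beta[of k] betas by simp

lemma sig_nonneg: "sig k \<ge> 0"
  by (induction k) (auto simp: init sig_Suc intro: add_nonneg_nonneg less_imp_le[OF tt_pos])

lemma eps_le_eps0: "eps k \<le> eps 0"
  by (rule lift_Suc_antimono_le[of eps 0 k]) (use eps_noninc in auto)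

lemma nu_ge_1: "nu \<ge> 1"
  using gb lb by (simp add: nu_def field_simps)

lemma beta_nu_lt_2: "beta k * (2 * mu + nu) < 2"
proof -
  have pos: "2 * mu + nu > 0" using mu nu_ge_1 by simp
  then have "bhi * (2 * mu + nu) < 2" using betas(3) by (simp add: nu_def pos_less_divide_eq)
  moreover have "beta k * (2 * mu + nu) \<le> bhi * (2 * mu + nu)"
    using beta[of k] pos by (intro mult_right_mono) auto
  ultimately show ?thesis by simp
qed

lemma iterate_step:
  assumes "y \<in> C"
  shows "(norm (x (Suc k) - y))\<^sup>2
           \<le> (norm (xr k - y))\<^sup>2 - 2 * (tt k / norm (s k)) * (f (xr k) - f y - eps k) + nu * (tt k)\<^sup>2"
    and "(norm (x (Suc k) - xr k))\<^sup>2 \<le> nu * (tt k)\<^sup>2"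
proof -
  have params: "0 \<le> gam k" "0 \<le> the k" "the k < 1/2" "0 \<le> lam k" "lam k < 1/2"
    using gam[of k] the[of k] lam[of k] tb lb by auto
  have "(1 + 2 * gam k) / (1 - 2 * lam k) \<le> nu"
    unfolding nu_def using gam[of k] lam[of k] lb by (intro frac_le) auto
  note step = inexact_proj_subgradient_step[OF xr_in_C assms conjunct2[OF s[of k]] _ xS[of k]
      phi[of k] params this]
  have "tt k / norm (s k) * norm (s k) = tt k" using norm_s_pos[of k] by simp
  then show "(norm (x (Suc k) - y))\<^sup>2
           \<le> (norm (xr k - y))\<^sup>2 - 2 * (tt k / norm (s k)) * (f (xr k) - f y - eps k) + nu * (tt k)\<^sup>2"
    and "(norm (x (Suc k) - xr k))\<^sup>2 \<le> nu * (tt k)\<^sup>2"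
    using step tt_pos[of k] norm_s_pos[of k] by simp_all
qed

lemma iterate_displacement: "norm (x (Suc k) - xr k) \<le> sqrt nu * tt k"
proof -
  have "norm (x (Suc k) - xr k) \<le> sqrt (nu * (tt k)\<^sup>2)"
    using iterate_step(2)[OF x_in_C[of 0], of k] by (simp add: real_le_rsqrt)
  then show ?thesis using tt_pos[of k] by (simp add: real_sqrt_mult)
qed

text \<open>The choice of \<open>beta k\<close> and \<open>eps k\<close> makes the error terms of the step
  absorbable, so every point of C whose value is below the level \<open>flev k\<close> gets closer.\<close>
lemma fejer_step:
  assumes "y \<in> C" and "f y \<le> flev k - eta" and "eta \<ge> 0"
  shows "(norm (x (Suc k) - y))\<^sup>2 \<le> (norm (xr k - y))\<^sup>2 - 2 * (tt k / norm (s k)) * eta"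
proof -
  define D where "D = f (xr k) - flev k"
  define t where "t = tt k / norm (s k)"
  have D_pos: "D > 0" using level_below_f[of k] by (simp add: D_def)
  have t_pos: "t > 0" using tt_pos[of k] norm_s_pos[of k] by (simp add: t_def)
  have tt_sq: "(tt k)\<^sup>2 = t * beta k * D" using tt[of k] by (simp add: t_def D_def power2_eq_square)
  have "f (xr k) - f y - eps k \<ge> D + eta - mu * beta k * D"
    using assms(2) eps[of k] by (simp add: D_def)
  then have "t * (f (xr k) - f y - eps k) \<ge> t * (D + eta - mu * beta k * D)"
    using t_pos by (intro mult_left_mono) auto
  moreover have "t * D * (2 - beta k * (2 * mu + nu)) \<ge> 0"
    using beta_nu_lt_2[of k] t_pos D_pos by simp
  ultimately show ?thesis
    using iterate_step(1)[OF assms(1), of k] tt_sq unfolding t_def[symmetric]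
    by (simp add: algebra_simps)
qed

lemma ref_value_lower_bound:
  assumes "\<And>k. c \<le> f (x k)"
  shows "c \<le> ref_value k"
proof -
  obtain j where "frec k = f (x j)" using frec_attained[of k] by auto
  then show ?thesis using frec_le_ref_value[of k] assms[of j] by simp
qed

lemma descents_finite:
  assumes lower: "\<And>k. c \<le> f (x k)" and no_reset: "\<And>k. K \<le> k \<Longrightarrow> \<not> reset k"
  shows "\<exists>K'\<ge>K. \<forall>k\<ge>K'. \<not> descent k"
proof (rule ccontr)
  assume "\<not> ?thesis"
  then have frequent: "\<And>N. K \<le> N \<Longrightarrow> \<exists>k\<ge>N. descent k" by blast
  have delta_const: "delta k = delta K" if "K \<le> k" for k
    using that by (induction k rule: dec_induct) (simp_all add: delta_Suc no_reset)
  have descend: "\<exists>N\<ge>K. ref_value N \<le> ref_value K - real m * delta K / 2" for m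
  proof (induction m)
    case (Suc m)
    then obtain N where N: "K \<le> N" "ref_value N \<le> ref_value K - real m * delta K / 2" by blast
    obtain k where k: "N \<le> k" "descent k" using frequent N(1) by blast
    have "ref_value (Suc k) = frec k" using ref_value_Suc[of k] k(2) by (simp add: restart_def)
    also have "\<dots> \<le> f (x k)" by (rule frec_le)
    also have "\<dots> \<le> ref_value k - delta k / 2"
      using k(2) by (simp add: descent_def)
    also have "\<dots> \<le> ref_value N - delta K / 2"
      using ref_value_antimono[OF k(1)] delta_const[of k] k(1) N(1) by simp
    finally show ?case using k(1) N by (intro exI[of _ "Suc k"]) (auto simp: algebra_simps add_divide_distrib)
  qed auto
  obtain m :: nat where "2 * (ref_value K - c) / delta K < real m"
    using reals_Archimedean2 by blast
  then have "ref_value K - c < real m * delta K / 2" using delta_pos[of K] by (simp add: field_simps)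
  moreover obtain N where "ref_value N \<le> ref_value K - real m * delta K / 2" using descend by blast
  ultimately show False using ref_value_lower_bound[OF lower, of N] by simp
qed

lemma restart_free_tail_near:
  assumes "\<And>k. m \<le> k \<Longrightarrow> \<not> restart k"
  shows "norm (x (m + n) - x m) \<le> sqrt nu * R"
proof -
  have xr_x: "xr k = x k" if "m \<le> k" for k
    using assms[OF that] xr_eq[of k] by (simp add: restart_def)
  have path: "norm (x (m + n) - x m) \<le> sqrt nu * (\<Sum>j\<in>{m..<m + n}. tt j)"
  proof (induction n)
    case (Suc n)
    have "norm (x (m + Suc n) - x m) \<le> norm (x (Suc (m + n)) - x (m + n)) + norm (x (m + n) - x m)"
      using norm_triangle_ineq[of "x (Suc (m + n)) - x (m + n)" "x (m + n) - x m"] by simp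
    also have "\<dots> \<le> sqrt nu * tt (m + n) + sqrt nu * (\<Sum>j\<in>{m..<m + n}. tt j)"
      using iterate_displacement[of "m + n"] xr_x[of "m + n"] Suc by simp
    finally show ?case by (simp add: algebra_simps)
  qed simp
  have "sig (m + n) = sig m + (\<Sum>j\<in>{m..<m + n}. tt j)"
    using group_stationary[of m "m + n"] assms by simp
  then have "(\<Sum>j\<in>{m..<m + n}. tt j) \<le> R"
    using sig_le_R[OF assms[of "m + n"]] sig_nonneg[of m] by simp
  then show ?thesis using path nu_ge_1 by (smt (verit) mult_left_mono real_sqrt_ge_zero)
qed

lemma resets_frequent:
  assumes lower: "\<And>k. c \<le> f (x k)"
  shows "\<exists>k\<ge>K. reset k"
proof (rule ccontr)
  assume "\<not> ?thesis"
  then have no_reset: "\<And>k. K \<le> k \<Longrightarrow> \<not> reset k" by blast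
  then obtain K' where "K \<le> K'" "\<And>k. K' \<le> k \<Longrightarrow> \<not> descent k"
    using descents_finite[OF lower] by blast
  with no_reset have K': "\<And>k. K' \<le> k \<Longrightarrow> \<not> restart k" by (simp add: restart_def)
  have stationary: "ref_value k = ref_value K' \<and> delta k = delta K'
      \<and> sig k = sig K' + (\<Sum>j\<in>{K'..<k}. tt j)" if "K' \<le> k" for k
    using group_stationary[OF that] K' by simp
  define d where "d = delta K'"
  have gap: "d / 2 < f (xr k) - flev k" if "K' \<le> k" for k
    using K'[OF that] stationary[OF that] stationary[of "Suc k"] that xr_eq[of k]
    by (simp add: flev_eq restart_def descent_def d_def)
  obtain L where L: "L > 0" and
    L_bound: "\<And>z e s. norm (z - x K') \<le> sqrt nu * R \<Longrightarrow> e \<le> eps 0 \<Longrightarrow> s \<in> eps_subdiff f e z \<Longrightarrow> norm s \<le> L"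
    using eps_subdiff_bounded[OF f_convex, of "x K'" "sqrt nu * R" "eps 0"] by blast
  define t0 where "t0 = blo * (d / 2) / L"
  have t0_pos: "t0 > 0" using betas delta_pos[of K'] L by (simp add: t0_def d_def)
  have tt_lower: "t0 \<le> tt k" if k: "K' \<le> k" for k
  proof -
    obtain n where n: "k = K' + n" using le_Suc_ex[OF k] by blast
    have "norm (s k) \<le> L"
      using L_bound[OF _ eps_le_eps0 conjunct2[OF s[of k]]] restart_free_tail_near[of K' n, OF K']
        xr_eq[of k] K'[OF k] n by (simp add: restart_def)
    moreover have "blo * (d / 2) \<le> beta k * (f (xr k) - flev k)"
      using beta[of k] betas gap[OF k] delta_pos[of K'] by (intro mult_mono) (auto simp: d_def)
    moreover have "0 < blo * (d / 2)" using betas delta_pos[of K'] by (simp add: d_def)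
    ultimately have "blo * (d / 2) / L \<le> beta k * (f (xr k) - flev k) / norm (s k)"
      using norm_s_pos[of k] by (intro frac_le) auto
    then show ?thesis using tt[of k] by (simp add: t0_def)
  qed
  obtain n :: nat where "R / t0 < real n" using reals_Archimedean2 by blast
  then have "R < real n * t0" using t0_pos by (simp add: field_simps)
  also have "\<dots> \<le> (\<Sum>j\<in>{K'..<K' + n}. tt j)"
    using sum_bounded_below[of "{K'..<K' + n}" t0 tt] tt_lower by simp
  also have "\<dots> \<le> sig (K' + n)" using stationary[of "K' + n"] sig_nonneg[of K'] by simp
  finally show False using sig_le_R[OF K'[of "K' + n"]] by simp
qed

lemma delta_eventually_less:
  assumes resets: "\<And>K. \<exists>k\<ge>K. reset k" and "e > 0"
  shows "\<exists>N. \<forall>k\<ge>N. delta k < e"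
proof -
  have halved: "\<exists>N. delta N \<le> delta 0 / 2 ^ m" for m
  proof (induction m)
    case (Suc m)
    then obtain N where N: "delta N \<le> delta 0 / 2 ^ m" by blast
    obtain k where k: "N \<le> k" "reset k" using resets by blast
    have "delta (Suc k) = delta k / 2" using delta_Suc[of k] k(2) by simp
    also have "\<dots> \<le> delta 0 / 2 ^ Suc m" using delta_antimono[OF k(1)] N by simp
    finally show ?case by blast
  qed (auto intro: exI[of _ 0])
  obtain m :: nat where "delta 0 / e < real m" using reals_Archimedean2 by blast
  then have "delta 0 / e < 2 ^ m" using of_nat_less_two_power[of m, where 'a = real] by linarith
  then have "delta 0 / 2 ^ m < e" using \<open>e > 0\<close> by (simp add: field_simps)
  moreover obtain N where "delta N \<le> delta 0 / 2 ^ m" using halved by blast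
  ultimately show ?thesis using delta_antimono by (meson le_less_trans order_trans)
qed

lemma iterates_bounded:
  assumes "y \<in> C" and below: "\<And>k. K \<le> k \<Longrightarrow> f y \<le> flev k"
  shows "\<exists>M. \<forall>k. norm (x k - y) \<le> M"
proof
  define M where "M = Max ((\<lambda>j. norm (x j - y)) ` {..K})"
  show "\<forall>k. norm (x k - y) \<le> M"
  proof
    fix k show "norm (x k - y) \<le> M"
    proof (induction k rule: less_induct)
      case (less k)
      show ?case
      proof (cases "k \<le> K")
        case True then show ?thesis unfolding M_def by (intro Max_ge) auto
      next
        case False
        then obtain k' where k': "k = Suc k'" "K \<le> k'" by (cases k) auto
        obtain j where "j \<le> k'" "xr k' = x j"
          using xr_eq[of k'] frec_attained[of k'] by (cases "reset k'") auto
        then have "norm (xr k' - y) \<le> M" using less[of j] k' by simp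
        moreover have "(norm (x k - y))\<^sup>2 \<le> (norm (xr k' - y))\<^sup>2"
          using fejer_step[OF assms(1), of k' 0] below[OF k'(2)] k' by simp
        ultimately show ?thesis by (meson norm_ge_zero order_trans power2_le_imp_le)
      qed
    qed
  qed
qed

lemma group_sig_bound:
  assumes start: "p = 0 \<or> restart p" and inside: "\<And>j. p < j \<Longrightarrow> j < q \<Longrightarrow> \<not> restart j"
    and "p < q" and y: "y \<in> C" and below: "f y \<le> frec p - 2 * delta q"
    and "L > 0" and s_bound: "\<And>k. norm (s k) \<le> L"
  shows "2 * delta q / L * sig q \<le> (norm (xrec p - y))\<^sup>2"
proof -
  have group: "ref_value k = frec p \<and> delta k = delta q \<and> sig k = (\<Sum>j\<in>{p..<k}. tt j)"
    if "p < k" "k \<le> q" for k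
    using group_stationary[of "Suc p" k] group_stationary[of "Suc p" q] group_start[OF start]
      inside that \<open>p < q\<close> by (simp add: sum.atLeast_Suc_lessThan)
  have one_step: "(norm (x (Suc k) - y))\<^sup>2 \<le> (norm (xr k - y))\<^sup>2 - 2 * delta q / L * tt k"
    if "p \<le> k" "k < q" for k
  proof -
    have "f y \<le> flev k - delta q"
      using group[of "Suc k"] that below by (simp add: flev_eq)
    then have "(norm (x (Suc k) - y))\<^sup>2 \<le> (norm (xr k - y))\<^sup>2 - 2 * (tt k / norm (s k)) * delta q"
      using fejer_step[OF y] delta_pos[of q] by simp
    moreover have "tt k / L \<le> tt k / norm (s k)"
      using s_bound[of k] norm_s_pos[of k] tt_pos[of k] \<open>L > 0\<close> by (intro divide_left_mono) auto
    then have "tt k / L * (2 * delta q) \<le> tt k / norm (s k) * (2 * delta q)"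
      using delta_pos[of q] by (intro mult_right_mono) auto
    ultimately show ?thesis by (simp add: mult.commute mult.left_commute)
  qed
  have telescope: "(norm (x (Suc (p + n)) - y))\<^sup>2
      \<le> (norm (xrec p - y))\<^sup>2 - 2 * delta q / L * (\<Sum>j\<in>{p..<Suc (p + n)}. tt j)"
    if "p + n < q" for n
    using that
  proof (induction n)
    case 0 then show ?case using one_step[of p] group_start[OF start] by simp
  next
    case (Suc n)
    have "xr (Suc (p + n)) = x (Suc (p + n))"
      using inside[of "Suc (p + n)"] Suc.prems xr_eq by (simp add: restart_def)
    then show ?case
      using Suc one_step[of "Suc (p + n)"] by (simp add: algebra_simps)
  qed
  have "q = Suc (p + (q - p - 1))" using \<open>p < q\<close> by simp
  then have "(norm (x q - y))\<^sup>2 \<le> (norm (xrec p - y))\<^sup>2 - 2 * delta q / L * sig q"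
    using telescope[of "q - p - 1"] group[of q] \<open>p < q\<close> by simp
  then show ?thesis using zero_le_power2[of "norm (x q - y)"] by linarith
qed

text \<open>The witness \<open>y'\<close> is the point of the segment from the record point to y whose
  value lies \<open>2 * delta q\<close> below the record; its distance to the record point is
  proportional to \<open>delta q\<close>.\<close>
lemma reset_delta_lower_bound:
  assumes "reset q" and y: "y \<in> C" and "eta > 0" and small: "delta q \<le> eta"
    and gap: "\<And>k. f y + 2 * eta \<le> frec k" and M: "\<And>k. norm (xrec k - y) \<le> M"
    and "L > 0" and s_bound: "\<And>k. norm (s k) \<le> L"
  shows "2 * R * eta\<^sup>2 < delta q * L * M\<^sup>2"
proof -
  have "q > 0" using \<open>reset q\<close> not_restart_0 by (cases q) (auto simp: restart_def)
  obtain p where p: "p \<le> q - 1" and start: "p = 0 \<or> restart p"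
    and before: "\<forall>j. p < j \<and> j \<le> q - 1 \<longrightarrow> \<not> restart j"
    using last_group_start by blast
  have "p < q" using p \<open>q > 0\<close> by simp
  have inside: "\<not> restart j" if "p < j" "j < q" for j using before that by simp
  define d where "d = delta q"
  define lam where "lam = d / eta"
  have d_pos: "d > 0" using delta_pos by (simp add: d_def)
  have lam: "0 < lam" "lam \<le> 1" using d_pos small \<open>eta > 0\<close> by (auto simp: lam_def d_def)
  define y' where "y' = (1 - lam) *\<^sub>R xrec p + lam *\<^sub>R y"
  have y'_C: "y' \<in> C" unfolding y'_def using lam xrec_in_C[of p] y by (intro convexD[OF C_convex]) auto
  have "f y' \<le> (1 - lam) * f (xrec p) + lam * f y"
    unfolding y'_def using lam by (intro convex_onD[OF f_convex]) auto
  moreover have "lam * (2 * eta) \<le> lam * (f (xrec p) - f y)"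
    using gap[of p] frec_attained[of p] lam by (intro mult_left_mono) auto
  moreover have "lam * (2 * eta) = 2 * d" using \<open>eta > 0\<close> by (simp add: lam_def)
  ultimately have "f y' \<le> frec p - 2 * delta q"
    using frec_attained[of p] by (simp add: d_def algebra_simps)
  from group_sig_bound[OF start inside \<open>p < q\<close> y'_C this \<open>L > 0\<close> s_bound]
  have "2 * d / L * sig q \<le> (norm (xrec p - y'))\<^sup>2" by (simp add: d_def)
  also have "xrec p - y' = lam *\<^sub>R (xrec p - y)" by (simp add: y'_def algebra_simps)
  also have "(norm (lam *\<^sub>R (xrec p - y)))\<^sup>2 = (lam * norm (xrec p - y))\<^sup>2" using lam by simp
  also have "(lam * norm (xrec p - y))\<^sup>2 \<le> (lam * M)\<^sup>2"
    using M[of p] lam by (intro power_mono mult_left_mono) auto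
  finally have "2 * d / L * sig q \<le> (d * M / eta)\<^sup>2" by (simp add: lam_def)
  moreover have "2 * d / L * R < 2 * d / L * sig q"
    using \<open>reset q\<close> d_pos \<open>L > 0\<close> by (intro mult_strict_left_mono) (auto simp: reset_def)
  ultimately have "2 * d / L * R < (d * M / eta)\<^sup>2" by linarith
  then have "d * (2 * R * eta\<^sup>2) < d * (d * L * M\<^sup>2)"
    using \<open>L > 0\<close> \<open>eta > 0\<close> by (simp add: field_simps power2_eq_square)
  then show ?thesis using d_pos by (simp add: d_def)
qed

lemma lower_bound_of_iterates_le_on_C:
  assumes lower: "\<And>k. c \<le> f (x k)" and y: "y \<in> C"
  shows "c \<le> f y"
proof (rule ccontr)
  assume "\<not> c \<le> f y"
  define eta where "eta = (c - f y) / 2"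
  have "eta > 0" using \<open>\<not> c \<le> f y\<close> by (simp add: eta_def)
  have resets: "\<And>K. \<exists>k\<ge>K. reset k" using resets_frequent[OF lower] by blast
  have gap: "f y + 2 * eta \<le> frec k" for k
  proof -
    obtain j where "frec k = f (x j)" using frec_attained[of k] by auto
    moreover have "f y + 2 * eta = c" by (simp add: eta_def field_simps)
    ultimately show ?thesis using lower[of j] by simp
  qed
  obtain K where K: "\<And>k. K \<le> k \<Longrightarrow> delta k < eta"
    using delta_eventually_less[OF resets \<open>eta > 0\<close>] by blast
  have "f y \<le> flev k" if "K \<le> k" for k
    using K[of "Suc k"] that ref_value_lower_bound[OF lower, of "Suc k"] delta_pos[of "Suc k"]
    by (simp add: flev_eq eta_def)
  then obtain M where M: "\<And>k. norm (x k - y) \<le> M" using iterates_bounded[OF y] by blast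
  have M_rec: "norm (xrec k - y) \<le> M" for k using frec_attained[of k] M by auto
  obtain L where "L > 0" and L_bound:
    "\<And>z e s. norm (z - y) \<le> M \<Longrightarrow> e \<le> eps 0 \<Longrightarrow> s \<in> eps_subdiff f e z \<Longrightarrow> norm s \<le> L"
    using eps_subdiff_bounded[OF f_convex, of y M "eps 0"] by blast
  have s_bound: "norm (s k) \<le> L" for k
    using L_bound[OF _ eps_le_eps0 conjunct2[OF s[of k]]] xr_eq[of k] M M_rec by auto
  define d where "d = min eta (R * eta\<^sup>2 / (L * (M\<^sup>2 + 1)))"
  have "L * (M\<^sup>2 + 1) > 0" using \<open>L > 0\<close> by (simp add: add_nonneg_pos)
  then have "d > 0" using \<open>eta > 0\<close> R by (simp add: d_def)
  then obtain K' where K': "\<And>k. K' \<le> k \<Longrightarrow> delta k < d"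
    using delta_eventually_less[OF resets] by blast
  obtain q where "K' \<le> q" "reset q" using resets by blast
  with K' have small: "delta q < d" by blast
  have "2 * R * eta\<^sup>2 < delta q * L * M\<^sup>2"
    using reset_delta_lower_bound[OF \<open>reset q\<close> y \<open>eta > 0\<close> _ gap M_rec \<open>L > 0\<close> s_bound]
      small by (simp add: d_def)
  also have "\<dots> \<le> delta q * (L * (M\<^sup>2 + 1))"
    using delta_pos[of q] \<open>L > 0\<close> by (simp add: algebra_simps)
  also have "\<dots> < R * eta\<^sup>2"
    using small \<open>L * (M\<^sup>2 + 1) > 0\<close> by (simp add: d_def pos_less_divide_eq)
  finally show False using R \<open>eta > 0\<close> by simp
qed

lemma inf_iterates_eq_inf_C: "(INF k. ereal (f (x k))) = (INF y\<in>C. ereal (f y))"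
proof (rule antisym)
  show "(INF y\<in>C. ereal (f y)) \<le> (INF k. ereal (f (x k)))"
    by (rule INF_greatest) (rule INF_lower, rule x_in_C)
next
  show "(INF k. ereal (f (x k))) \<le> (INF y\<in>C. ereal (f y))"
  proof (rule INF_greatest)
    fix y assume "y \<in> C"
    have "(INF k. ereal (f (x k))) \<le> ereal (f (x 0))" by (rule INF_lower) simp
    then show "(INF k. ereal (f (x k))) \<le> ereal (f y)"
    proof (cases "INF k. ereal (f (x k))")
      case (real c)
      have "c \<le> f (x k)" for k
      proof -
        have "(INF k. ereal (f (x k))) \<le> ereal (f (x k))" by (rule INF_lower) simp
        then show ?thesis using real by simp
      qed
      then show ?thesis using real lower_bound_of_iterates_le_on_C[OF _ \<open>y \<in> C\<close>] by simp
    qed auto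
  qed
qed

end

theorem mainTheorem10:
  fixes f :: "'a::euclidean_space \<Rightarrow> real" and C :: "'a set"
    and x xr xrec s :: "nat \<Rightarrow> 'a"
    and frec flev sig sg beta eps tt gam the lam :: "nat \<Rightarrow> real"
    and lc lc' kk :: "nat \<Rightarrow> nat" and dl :: "nat \<Rightarrow> real"
    and phi :: "nat \<Rightarrow> 'a \<Rightarrow> 'a \<Rightarrow> 'a \<Rightarrow> real"
    and R gb tb lb mu blo bhi :: real
  assumes f_convex: "convex_on UNIV f"
    and C_closed: "closed C" and C_convex: "convex C" and C_ne: "C \<noteq> {}"
    \<comment> \<open>standing assumptions\<close>
    and gam: "\<And>k. 0 \<le> gam k \<and> gam k < gb" and gb: "0 \<le> gb"
    and the: "\<And>k. 0 \<le> the k \<and> the k < tb" and tb: "0 \<le> tb" "tb < 1/2"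
    and lam: "\<And>k. 0 \<le> lam k \<and> lam k < lb" and lb: "0 \<le> lb" "lb < 1/2"
    and mu: "0 \<le> mu"
    and betas: "0 < blo" "blo \<le> bhi" "bhi < 2 / (2 * mu + (1 + 2 * gb) / (1 - 2 * lb))"
    \<comment> \<open>Step 0\<close>
    and x0: "x 0 \<in> C" and dl0: "dl 0 > 0" and R: "R > 0"
    and init: "sig 0 = 0" "lc 0 = 0" "kk 0 = 0"
    \<comment> \<open>Step 1 (record values; f_rec_{-1} = +infinity)\<close>
    and rec0: "frec 0 = f (x 0)" "xrec 0 = x 0"
    and recS: "\<And>k. if f (x (Suc k)) < frec k
                 then frec (Suc k) = f (x (Suc k)) \<and> xrec (Suc k) = x (Suc k)
                 else frec (Suc k) = frec k \<and> xrec (Suc k) = xrec k"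
    \<comment> \<open>Step 2: the algorithm never stops (infinite sequence)\<close>
    and nostop: "\<And>k. 0 \<notin> eps_subdiff f 0 (x k)"
    \<comment> \<open>Steps 3 and 4; xr k is x_k after a possible reset, sg k is sigma_k after a possible reset,
        lc k / lc' k is the counter l before / after Steps 3-4\<close>
    and step34: "\<And>k.
       if f (x k) \<le> frec (kk (lc k)) - dl (lc k) / 2
       then kk (Suc (lc k)) = k \<and> sg k = 0 \<and> dl (Suc (lc k)) = dl (lc k)
            \<and> lc' k = Suc (lc k) \<and> xr k = x k
       else if sig k > R
       then kk (Suc (lc k)) = k \<and> sg k = 0 \<and> dl (Suc (lc k)) = dl (lc k) / 2
            \<and> lc' k = Suc (lc k) \<and> xr k = xrec k
       else sg k = sig k \<and> lc' k = lc k \<and> xr k = x k"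
    \<comment> \<open>Step 5\<close>
    and flev: "\<And>k. flev k = frec (kk (lc' k)) - dl (lc' k)"
    and beta: "\<And>k. blo \<le> beta k \<and> beta k \<le> bhi"
    and eps_noninc: "\<And>k. eps (Suc k) \<le> eps k"
    and eps: "\<And>k. 0 < eps k \<and> eps k \<le> mu * beta k * (f (xr k) - flev k)"
    and s: "\<And>k. s k \<noteq> 0 \<and> s k \<in> eps_subdiff f (eps k) (xr k)"
    and tt: "\<And>k. tt k = beta k * (f (xr k) - flev k) / norm (s k)"
    and phi: "\<And>k. rel_err_tol (gam k) (the k) (lam k) (phi k)"
    and xS: "\<And>k. x (Suc k) \<in> inexact_proj C (phi k) (xr k) (xr k - (tt k / norm (s k)) *\<^sub>R s k)"
    \<comment> \<open>Step 6\<close>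
    and sigS: "\<And>k. sig (Suc k) = sg k + tt k"
    and lcS: "\<And>k. lc (Suc k) = lc' k"
  shows "(INF k. ereal (f (x k))) = (INF y\<in>C. ereal (f y))"
proof -
  interpret sinexpd f C x xr xrec s frec flev sig sg beta eps tt gam the lam lc lc' kk dl phi
      R gb tb lb mu blo bhi
    by unfold_locales (fact assms)+
  show ?thesis by (rule inf_iterates_eq_inf_C)
qed

end
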